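(* Let $M\ge1$ and $0\le j<M$. Let $\mathbf k^j=(k^j_0,\dots,k^j_{M-1})$ satisfy $k^j_i=\infty$ for $i<j$, with $k^j_j\le k^j_{j+1}\le\dots\le k^j_{M-1}$ positive integers. Define $\mathbf k^{j+1}$ by $$k^{j+1}_i=\begin{cases}k^j_i-\left\lceil k^j_i/k^j_j\right\rceil, & i>j,\\ \infty, & i\le j.\end{cases}$$ If $\mathbf k^{j+1}$ is schedulable, then $\mathbf k^j$ is schedulable. Moreover, there exists a schedule satisfying $\mathbf k^j$ in which task $v_j$ is scheduled exactly every $k^j_j$ slots.
   Context: Pinwheel scheduling: given a vector $\mathbf k=(k_0,\dots,k_{M-1})$ with entries in $\mathbb Z_{>0}\cup\{\infty\}$, a schedule is an assignment of at most one task from $\{v_0,\dots,v_{M-1}\}$ to each time slot. The schedule satisfies $\mathbf k$ if, for every $i$ with $k_i<\infty$, the gap between consecutive occurrences of $v_i$ (and the time until its first occurrence) is at most $k_i$. Equivalently, every window of $k_i$ consecutive slots contains $v_i$. An entry $k_i=\infty$ means task $v_i$ is absent and imposes no constraint. The vector $\mathbf k$ is schedulable if such a schedule exists. *)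

theory Defs
  imports Complex_Main "HOL-Library.Extended_Nat"
begin

text \<open>A pinwheel instance with M tasks v_0..v_{M-1} is a vector k :: nat => enat
  (only the entries i < M matter); infinity means the task is absent.\<close>

definition is_schedule :: "nat \<Rightarrow> (nat \<Rightarrow> nat option) \<Rightarrow> bool" where
  "is_schedule M s \<longleftrightarrow> (\<forall>t i. s t = Some i \<longrightarrow> i < M)"

definition satisfies :: "nat \<Rightarrow> (nat \<Rightarrow> enat) \<Rightarrow> (nat \<Rightarrow> nat option) \<Rightarrow> bool" where
  "satisfies M k s \<longleftrightarrow> is_schedule M s \<and>
     (\<forall>i<M. \<forall>n. k i = enat n \<longrightarrow> (\<forall>t. \<exists>u. t \<le> u \<and> u < t + n \<and> s u = Some i))"

definition schedulable :: "nat \<Rightarrow> (nat \<Rightarrow> enat) \<Rightarrow> bool" where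
  "schedulable M k \<longleftrightarrow> (\<exists>s. satisfies M k s)"

definition reduce :: "nat \<Rightarrow> (nat \<Rightarrow> enat) \<Rightarrow> nat \<Rightarrow> enat" where
  "reduce j k i = (if j < i then
      enat (the_enat (k i) - nat \<lceil>real (the_enat (k i)) / real (the_enat (k j))\<rceil>)
    else \<infinity>)"

end

theory Submission imports Defs begin

text \<open>Let p = k_j. Reserve for v_j every slot u with u mod p = p - 1 and fill the remaining
  slots, in order, with a schedule s satisfying the reduced vector. A window of n consecutive
  slots contains at most \<lceil>n/p\<rceil> reserved slots, so its free slots carry a window of at least
  n - \<lceil>n/p\<rceil> consecutive slots of s, which contains v_i whenever n = k_i.\<close>

text \<open>Call slot u free if u mod p \<noteq> p - 1. Then compress p u is the number of free slots
  before u, and for p \<ge> 2 expand p m is the position of the free slot number m.\<close>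

definition compress :: "nat \<Rightarrow> nat \<Rightarrow> nat" where
  "compress p u = u - u div p"

definition expand :: "nat \<Rightarrow> nat \<Rightarrow> nat" where
  "expand p m = m + m div (p - 1)"

text \<open>Occurrences of v_j in s are dropped; the reduced vector does not constrain v_j anyway.\<close>

definition reserve :: "nat \<Rightarrow> nat \<Rightarrow> (nat \<Rightarrow> nat option) \<Rightarrow> nat \<Rightarrow> nat option" where
  "reserve p j s u =
    (if u mod p = p - 1 then Some j
     else if s (compress p u) = Some j then None else s (compress p u))"

lemma compress_mono: "u \<le> v \<Longrightarrow> compress p u \<le> compress p v"
proof (induction v rule: dec_induct)
  case (step v)
  have "Suc v div p \<le> Suc (v div p)" by (simp add: div_Suc)
  then show ?case using step.IH by (simp add: compress_def)
qed simp

lemma compress_Suc: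
  assumes "u mod p \<noteq> p - 1"
  shows "compress p (Suc u) = Suc (compress p u)"
proof -
  have "Suc u mod p \<noteq> 0" using assms by (simp add: mod_Suc)
  then have "Suc u div p = u div p" by (simp add: div_Suc)
  then show ?thesis by (simp add: compress_def Suc_diff_le div_le_dividend)
qed

lemma expand_eq:
  assumes "p \<ge> 2"
  shows "expand p m = m div (p - 1) * p + m mod (p - 1)"
proof -
  have "m div (p - 1) * p = m div (p - 1) * (p - 1) + m div (p - 1)"
    using assms by (cases p) auto
  then show ?thesis using div_mult_mod_eq[of m "p - 1"] unfolding expand_def by linarith
qed

lemma expand_mod_ne:
  assumes "p \<ge> 2"
  shows "expand p m mod p \<noteq> p - 1"
proof -
  have "m mod (p - 1) < p - 1" using assms by simp
  moreover have "expand p m mod p = m mod (p - 1)"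
    using calculation by (simp add: expand_eq)
  ultimately show ?thesis by simp
qed

lemma compress_expand:
  assumes "p \<ge> 2"
  shows "compress p (expand p m) = m"
proof -
  have "m mod (p - 1) < p - 1" using assms by simp
  then have "m mod (p - 1) < p" by linarith
  then have "expand p m div p = m div (p - 1)" using assms by (simp add: expand_eq)
  then show ?thesis by (simp add: compress_def expand_def)
qed

lemma le_expand_if_compress_le:
  assumes "p \<ge> 2" and "compress p t \<le> m"
  shows "t \<le> expand p m"
proof (rule ccontr)
  assume "\<not> t \<le> expand p m"
  then have "compress p (Suc (expand p m)) \<le> compress p t"
    by (intro compress_mono) simp
  also have "\<dots> \<le> m" by (fact assms(2))
  finally show False
    using compress_Suc[OF expand_mod_ne[OF assms(1)]] by (simp add: compress_expand assms(1))
qed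

lemma expand_less_if_less_compress:
  assumes "p \<ge> 2" and "m < compress p x"
  shows "expand p m < x"
proof (rule ccontr)
  assume "\<not> expand p m < x"
  then have "compress p x \<le> compress p (expand p m)"
    by (intro compress_mono) simp
  then show False using assms by (simp add: compress_expand)
qed

lemma compress_add_ge:
  assumes "p > 0"
  shows "compress p t + (n - nat \<lceil>real n / real p\<rceil>) \<le> compress p (t + n)"
proof -
  define C where "C = nat \<lceil>real n / real p\<rceil>"
  have "real n \<le> real_of_int \<lceil>real n / real p\<rceil> * real p"
    using assms by (intro ceiling_divide_upper) simp
  then have "real n \<le> real (C * p)" unfolding C_def by simp
  then have "n \<le> C * p" by (simp only: of_nat_le_iff)
  then have "(t + n) div p \<le> (t + C * p) div p" by (intro div_le_mono) simp
  also have "\<dots> = t div p + C" using assms by simp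
  finally have "(t + n) div p \<le> t div p + C" .
  moreover have "compress p t \<le> compress p (t + n)" by (simp add: compress_mono)
  ultimately show ?thesis unfolding compress_def C_def[symmetric]
    using div_le_dividend[of t p] div_le_dividend[of "t + n" p] by linarith
qed

lemma reserve_window:
  assumes "p \<ge> 2" and "i \<noteq> j"
    and "\<forall>t. \<exists>u. t \<le> u \<and> u < t + n' \<and> s u = Some i"
    and "n' \<le> n - nat \<lceil>real n / real p\<rceil>"
  shows "\<exists>u. t \<le> u \<and> u < t + n \<and> reserve p j s u = Some i"
proof -
  obtain m where m: "compress p t \<le> m" "m < compress p t + n'" "s m = Some i"
    using assms(3) by blast
  have "m < compress p (t + n)"
    using m(2) assms(4) compress_add_ge[of p t n] assms(1) by linarith
  then have "t \<le> expand p m \<and> expand p m < t + n"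
    using m(1) assms(1) le_expand_if_compress_le expand_less_if_less_compress by blast
  moreover have "reserve p j s (expand p m) = Some i"
    using assms(1,2) m(3) expand_mod_ne[OF assms(1)] by (simp add: reserve_def compress_expand)
  ultimately show ?thesis by blast
qed

lemma reserve_eq_Some_self: "reserve p j s u = Some j \<longleftrightarrow> u mod p = p - 1"
  by (simp add: reserve_def)

lemma reserve_window_self:
  assumes "p > 0"
  shows "\<exists>u. t \<le> u \<and> u < t + p \<and> reserve p j s u = Some j"
proof -
  define u where "u = t div p * p + (p - 1)"
  have "t \<le> u \<and> u < t + p"
    using assms div_mult_mod_eq[of t p] mod_less_divisor[of p t] unfolding u_def by linarith
  moreover have "u mod p = p - 1" using assms unfolding u_def mod_mult_self3 by simp
  ultimately show ?thesis using reserve_eq_Some_self by blast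
qed

lemma satisfies_reserve:
  assumes s: "satisfies M (reduce j k) s" and "j < M"
    and kj: "k j = enat p" "p > 0"
    and below: "\<forall>i<j. k i = \<infinity>"
  shows "satisfies M k (reserve p j s)"
  unfolding satisfies_def
proof (intro conjI allI impI)
  show "is_schedule M (reserve p j s)"
    using s \<open>j < M\<close> by (auto simp: satisfies_def is_schedule_def reserve_def)
next
  fix i n t assume "i < M" and ki: "k i = enat n"
  consider "i < j" | "i = j" | "j < i" by linarith
  then show "\<exists>u. t \<le> u \<and> u < t + n \<and> reserve p j s u = Some i"
  proof cases
    case 1
    then show ?thesis using below ki by simp
  next
    case 2
    then show ?thesis using ki kj reserve_window_self by simp
  next
    case 3
    define n' where "n' = n - nat \<lceil>real n / real p\<rceil>"
    have "reduce j k i = enat n'" using 3 ki kj by (simp add: reduce_def n'_def)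
    then have window: "\<forall>t. \<exists>u. t \<le> u \<and> u < t + n' \<and> s u = Some i"
      using s \<open>i < M\<close> by (simp add: satisfies_def)
    have "p \<ge> 2"
    proof (rule ccontr)
      assume "\<not> p \<ge> 2"
      then have "p = 1" using kj(2) by linarith
      then have "n' = 0" by (simp add: n'_def)
      then show False using window by auto
    qed
    then show ?thesis using 3 window reserve_window[of p i j n' s n t] by (simp add: n'_def)
  qed
qed

theorem lemma4:
  fixes M j :: nat and k :: "nat \<Rightarrow> enat"
  assumes "M \<ge> 1" and "j < M"
    and "\<forall>i<j. k i = \<infinity>"
    and "\<forall>i. j \<le> i \<and> i < M \<longrightarrow> k i \<noteq> \<infinity> \<and> k i > 0"
    and "\<forall>i i'. j \<le> i \<and> i \<le> i' \<and> i' < M \<longrightarrow> k i \<le> k i'"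
    and "schedulable M (reduce j k)"
  shows "schedulable M k \<and>
    (\<exists>s. satisfies M k s \<and>
       (\<exists>c < the_enat (k j). \<forall>t. s t = Some j \<longleftrightarrow> t mod the_enat (k j) = c))"
proof -
  define p where "p = the_enat (k j)"
  have kj: "k j = enat p" and "p > 0"
    using assms(2,4) unfolding p_def by (auto simp: enat_0_iff)
  obtain s where "satisfies M (reduce j k) s"
    using assms(6) unfolding schedulable_def by blast
  then have "satisfies M k (reserve p j s)"
    using satisfies_reserve assms(2,3) kj \<open>p > 0\<close> by blast
  then show ?thesis
    unfolding schedulable_def p_def[symmetric] using \<open>p > 0\<close> reserve_eq_Some_self
    by (metis diff_less zero_less_one)
qed

end
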